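(* There exist a nondeterministic planning domain $D$, a finite-state policy $f$, and an LTL$_f$ formula $\psi$ such that $(D,f)\models A^{=1}(\psi)$, but there is no policy $g$ with $(D,g)\models A^{\text{sa-fair}}(\psi)$.
   Context: A nondeterministic planning domain is a tuple $D=(St,Act,s_0,Tr)$ with $St=2^{\mathcal{F}}$ a finite set of states (assignments to Boolean fluents $\mathcal{F}$), $Act=2^{\mathcal{A}}$ a finite set of actions, initial state $s_0$, and transition relation $Tr\subseteq St\times Act\times St$; every state has an applicable action ($a$ is applicable in $s$ if some $(s,a,s')\in Tr$). A trace is a finite or infinite sequence $(s_0\cup a_0)(s_1\cup a_1)\cdots$ over $2^{\mathcal{F}\cup\mathcal{A}}$ starting at $s_0$ with $(s_{i-1},a_{i-1},s_i)\in Tr$. A policy is a function $f:St^+\to Act$ with $f(u)$ applicable in the last state of $u$; a trace is an $f$-trace if $f(s_0\cdots s_i)=a_i$ for every prefix; a finite-state policy is one computed by a finite-state input/output automaton. LTL$_f$ is LTL (atoms, $\neg$, $\wedge$, next $X$, until $U$) interpreted over finite sequences over $2^{\mathcal{F}\cup\mathcal{A}}$, where $X\psi$ holds at $j$ only if $j+1$ is a position of the sequence; an infinite trace satisfies an LTL$_f$ formula if some finite prefix does. An infinite trace is state-action fair if for every $(s,a,s')\in Tr$, if $s,a$ occurs infinitely often then $s,a$ immediately followed by $s'$ occurs infinitely often. $(D,f)\models A^{\text{sa-fair}}\psi$ means every infinite state-action fair $f$-trace satisfies $\psi$. $(D,f)\models A^{=1}\psi$ means that, in any stochastic domain whose transition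 distributions $Pr(s,a)$ have support exactly $Tr(s,a)$, the infinite $f$-traces satisfying $\psi$ have probability $1$ under the Markov chain induced by $D$ and $f$ (this is independent of the choice of such probabilities). *)

theory Defs
  imports "HOL-Probability.Probability"
begin

text \<open>Fluents and action propositions are both drawn from one proposition type 'p;
  they are required to be disjoint, so that a letter s \<union> a over 2^(F \<union> A) determines s and a.\<close>

record 'p domain =
  fluents :: "'p set"
  actions :: "'p set"
  init    :: "'p set"
  trans   :: "('p set \<times> 'p set \<times> 'p set) set"

definition states :: "'p domain \<Rightarrow> 'p set set" where
  "states D = Pow (fluents D)"

definition acts :: "'p domain \<Rightarrow> 'p set set" where
  "acts D = Pow (actions D)"

definition applicable :: "'p domain \<Rightarrow> 'p set \<Rightarrow> 'p set \<Rightarrow> bool" where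
  "applicable D s a \<longleftrightarrow> (\<exists>s'. (s, a, s') \<in> trans D)"

definition planning_domain :: "'p domain \<Rightarrow> bool" where
  "planning_domain D \<longleftrightarrow>
     finite (fluents D) \<and> finite (actions D) \<and> fluents D \<inter> actions D = {} \<and>
     init D \<in> states D \<and>
     trans D \<subseteq> states D \<times> acts D \<times> states D \<and>
     (\<forall>s\<in>states D. \<exists>a. applicable D s a)"

definition is_policy :: "'p domain \<Rightarrow> ('p set list \<Rightarrow> 'p set) \<Rightarrow> bool" where
  "is_policy D f \<longleftrightarrow>
     (\<forall>u. u \<noteq> [] \<and> set u \<subseteq> states D \<longrightarrow> applicable D (last u) (f u))"

text \<open>Finite-state policy: computed by a finite-state input/output (Mealy) automaton
  with states Q, initial state q0, transition function delta reading domain states,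
  and output function out: the action on history s0...si is out (state after reading
  s0...s(i-1)) si.\<close>

definition finite_state_policy :: "'p domain \<Rightarrow> ('p set list \<Rightarrow> 'p set) \<Rightarrow> bool" where
  "finite_state_policy D f \<longleftrightarrow> is_policy D f \<and>
     (\<exists>(Q :: nat set) q0 (delta :: nat \<Rightarrow> 'p set \<Rightarrow> nat) (out :: nat \<Rightarrow> 'p set \<Rightarrow> 'p set).
        finite Q \<and> q0 \<in> Q \<and> (\<forall>q\<in>Q. \<forall>s\<in>states D. delta q s \<in> Q) \<and>
        (\<forall>u. u \<noteq> [] \<and> set u \<subseteq> states D \<longrightarrow> f u = out (foldl delta q0 (butlast u)) (last u)))"

definition is_f_trace :: "'p domain \<Rightarrow> ('p set list \<Rightarrow> 'p set) \<Rightarrow> (nat \<Rightarrow> 'p set) \<Rightarrow> (nat \<Rightarrow> 'p set) \<Rightarrow> bool" where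
  "is_f_trace D f ss as \<longleftrightarrow>
     ss 0 = init D \<and>
     (\<forall>i. (ss i, as i, ss (Suc i)) \<in> trans D) \<and>
     (\<forall>i. as i = f (map ss [0..<Suc i]))"

definition sa_fair :: "'p domain \<Rightarrow> (nat \<Rightarrow> 'p set) \<Rightarrow> (nat \<Rightarrow> 'p set) \<Rightarrow> bool" where
  "sa_fair D ss as \<longleftrightarrow>
     (\<forall>s a s'. (s, a, s') \<in> trans D \<longrightarrow>
        (\<exists>\<^sub>\<infinity> i. ss i = s \<and> as i = a) \<longrightarrow>
        (\<exists>\<^sub>\<infinity> i. ss i = s \<and> as i = a \<and> ss (Suc i) = s'))"

datatype 'p ltlf =
    Atom 'p
  | Neg "'p ltlf"
  | Conj "'p ltlf" "'p ltlf"
  | Next "'p ltlf"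
  | Until "'p ltlf" "'p ltlf"

fun ltlf_atoms :: "'p ltlf \<Rightarrow> 'p set" where
  "ltlf_atoms (Atom p) = {p}"
| "ltlf_atoms (Neg \<phi>) = ltlf_atoms \<phi>"
| "ltlf_atoms (Conj \<phi> \<psi>) = ltlf_atoms \<phi> \<union> ltlf_atoms \<psi>"
| "ltlf_atoms (Next \<phi>) = ltlf_atoms \<phi>"
| "ltlf_atoms (Until \<phi> \<psi>) = ltlf_atoms \<phi> \<union> ltlf_atoms \<psi>"

fun ltlf_sat :: "'p set list \<Rightarrow> nat \<Rightarrow> 'p ltlf \<Rightarrow> bool" where
  "ltlf_sat w j (Atom p) \<longleftrightarrow> p \<in> w ! j"
| "ltlf_sat w j (Neg \<phi>) \<longleftrightarrow> \<not> ltlf_sat w j \<phi>"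
| "ltlf_sat w j (Conj \<phi> \<psi>) \<longleftrightarrow> ltlf_sat w j \<phi> \<and> ltlf_sat w j \<psi>"
| "ltlf_sat w j (Next \<phi>) \<longleftrightarrow> Suc j < length w \<and> ltlf_sat w (Suc j) \<phi>"
| "ltlf_sat w j (Until \<phi> \<psi>) \<longleftrightarrow>
     (\<exists>k. j \<le> k \<and> k < length w \<and> ltlf_sat w k \<psi> \<and> (\<forall>i. j \<le> i \<and> i < k \<longrightarrow> ltlf_sat w i \<phi>))"

definition ltlf_models :: "'p set list \<Rightarrow> 'p ltlf \<Rightarrow> bool" where
  "ltlf_models w \<phi> \<longleftrightarrow> w \<noteq> [] \<and> ltlf_sat w 0 \<phi>"

definition inf_sat :: "(nat \<Rightarrow> 'p set) \<Rightarrow> (nat \<Rightarrow> 'p set) \<Rightarrow> 'p ltlf \<Rightarrow> bool" where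
  "inf_sat ss as \<phi> \<longleftrightarrow> (\<exists>n. ltlf_models (map (\<lambda>i. ss i \<union> as i) [0..<Suc n]) \<phi>)"

definition A_sa_fair :: "'p domain \<Rightarrow> ('p set list \<Rightarrow> 'p set) \<Rightarrow> 'p ltlf \<Rightarrow> bool" where
  "A_sa_fair D f \<phi> \<longleftrightarrow>
     (\<forall>ss as. is_f_trace D f ss as \<and> sa_fair D ss as \<longrightarrow> inf_sat ss as \<phi>)"

definition stoch_instance :: "'p domain \<Rightarrow> ('p set \<Rightarrow> 'p set \<Rightarrow> 'p set pmf) \<Rightarrow> bool" where
  "stoch_instance D Pr \<longleftrightarrow>
     (\<forall>s\<in>states D. \<forall>a. applicable D s a \<longrightarrow> set_pmf (Pr s a) = {s'. (s, a, s') \<in> trans D})"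

text \<open>The Markov chain induced by D, Pr and a (history-dependent) policy f is realised
  as follows: for every history h an independent successor rho h ~ Pr (last h) (f h)
  is sampled (infinite product measure); the run then follows these samples.  The law of
  the resulting state/action sequence is exactly that of the induced Markov chain.\<close>

primrec run_hist :: "'p domain \<Rightarrow> ('p set list \<Rightarrow> 'p set) \<Rightarrow> nat \<Rightarrow> 'p set list" where
  "run_hist D rho 0 = [init D]"
| "run_hist D rho (Suc n) = run_hist D rho n @ [rho (run_hist D rho n)]"

definition induced_chain ::
  "('p set \<Rightarrow> 'p set \<Rightarrow> 'p set pmf) \<Rightarrow> ('p set list \<Rightarrow> 'p set) \<Rightarrow> ('p set list \<Rightarrow> 'p set) measure" where
  "induced_chain Pr f = (\<Pi>\<^sub>M h\<in>UNIV. measure_pmf (Pr (last h) (f h)))"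

definition A_prob1 :: "'p domain \<Rightarrow> ('p set list \<Rightarrow> 'p set) \<Rightarrow> 'p ltlf \<Rightarrow> bool" where
  "A_prob1 D f \<phi> \<longleftrightarrow>
     (\<forall>Pr. stoch_instance D Pr \<longrightarrow>
        (AE rho in induced_chain Pr f.
           inf_sat (\<lambda>i. last (run_hist D rho i)) (\<lambda>i. f (run_hist D rho i)) \<phi>))"

end

theory Submission
  imports Defs
begin

(* The domain has one fluent, set or cleared nondeterministically at every step by the only
   applicable (empty) action.  The formula breaks_0011 says that some state agrees with the state
   two steps later, or that the fluent holds in the second state; it is violated by exactly one
   infinite trace, the periodic state sequence {} {} {0} {0} {} {} {0} {0} ...  Under any
   stochastic instance, following this trace for N steps has probability at most c^N for some
   c < 1, so the only policy wins with probability 1.  Yet the trace takes each of the four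
   transitions infinitely often, so it is state-action fair, and every policy must play it. *)

lemma pmf_less_one:
  assumes "\<not> set_pmf p \<subseteq> {y}"
  shows "pmf p y < 1"
proof -
  obtain z where z: "z \<in> set_pmf p" "z \<noteq> y"
    using assms by blast
  have "pmf p y = measure_pmf.prob p {y}" by (simp add: measure_pmf_single)
  also have "\<dots> \<le> measure_pmf.prob p (UNIV - {z})"
    using z by (intro measure_pmf.finite_measure_mono) auto
  also have "\<dots> = 1 - pmf p z"
    using measure_pmf.prob_compl[of "{z}" p] by (simp add: measure_pmf_single)
  also have "\<dots> < 1" using pmf_positive[OF z(1)] by simp
  finally show ?thesis .
qed

lemma product_prob_space_measure_pmf: "product_prob_space (\<lambda>i. measure_pmf (p i))"
  by (intro product_prob_space.intro product_sigma_finite.intro product_prob_space_axioms.intro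
      prob_space_imp_sigma_finite prob_space_measure_pmf)

lemma AE_PiM_measure_pmf_in_set_pmf:
  "AE \<rho> in PiM UNIV (\<lambda>i. measure_pmf (p i)). \<rho> i \<in> set_pmf (p i)"
  by (rule product_prob_space.AE_component[OF product_prob_space_measure_pmf])
     (simp_all add: AE_measure_pmf)

lemma AE_PiM_measure_pmf_leaves_path:
  fixes p :: "'i \<Rightarrow> 'a pmf" and hs :: "nat \<Rightarrow> 'i" and t :: "nat \<Rightarrow> 'a"
  assumes inj: "inj hs"
    and fin: "finite (range (\<lambda>n. (p (hs n), t n)))"
    and less_one: "\<And>n. pmf (p (hs n)) (t n) < 1"
  shows "AE \<rho> in PiM UNIV (\<lambda>i. measure_pmf (p i)). \<exists>n. \<rho> (hs n) \<noteq> t n"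
proof -
  define M where "M = (\<lambda>i. measure_pmf (p i))"
  interpret product_prob_space M UNIV
    unfolding M_def by (rule product_prob_space_measure_pmf)
  define c where "c = Max ((\<lambda>(q, y). pmf q y) ` range (\<lambda>n. (p (hs n), t n)))"
  have c_ge: "pmf (p (hs n)) (t n) \<le> c" for n
    unfolding c_def using fin by (intro Max_ge) auto
  have "c < 1"
    unfolding c_def using fin less_one by (subst Max_less_iff) auto
  have "0 \<le> c"
    by (rule order_trans[OF pmf_nonneg c_ge])
  define path where "path = {\<rho> \<in> space (PiM UNIV M). \<forall>n. \<rho> (hs n) = t n}"
  define prefix where
    "prefix N = {\<rho> \<in> space (PiM UNIV M). \<forall>i\<in>hs ` {..<N}. \<rho> i \<in> {t (inv hs i)}}" for N
  have prefix_sets: "prefix N \<in> sets (PiM UNIV M)" for N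
    unfolding prefix_def by (intro sets.sets_Collect_finite_All) (auto simp: M_def)
  have "path \<subseteq> prefix N" for N
    unfolding path_def prefix_def using inj by auto
  have "measure (PiM UNIV M) path \<le> c ^ N" for N
  proof -
    have "emeasure (PiM UNIV M) (prefix N) = (\<Prod>i\<in>hs ` {..<N}. emeasure (M i) {t (inv hs i)})"
      unfolding prefix_def by (rule emeasure_PiM_Collect) (auto simp: M_def)
    also have "\<dots> = (\<Prod>n<N. ennreal (pmf (p (hs n)) (t n)))"
      using inj by (simp add: prod.reindex inj_on_subset M_def emeasure_pmf_single)
    finally have "measure (PiM UNIV M) (prefix N) = (\<Prod>n<N. pmf (p (hs n)) (t n))"
      by (simp add: emeasure_eq_measure prod_ennreal prod_nonneg)
    also have "\<dots> \<le> c ^ N"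
      using prod_mono[of "{..<N}" "\<lambda>n. pmf (p (hs n)) (t n)" "\<lambda>_. c"] c_ge by simp
    finally show ?thesis
      using finite_measure_mono[OF \<open>path \<subseteq> prefix N\<close> prefix_sets] by linarith
  qed
  then have "measure (PiM UNIV M) path \<le> 0"
    using LIMSEQ_power_zero[of c] \<open>0 \<le> c\<close> \<open>c < 1\<close> by (intro LIMSEQ_le_const) auto
  moreover have "path \<in> sets (PiM UNIV M)"
    unfolding path_def by (intro sets.sets_Collect_countable_All) (auto simp: M_def)
  ultimately have "path \<in> null_sets (PiM UNIV M)"
    by (intro null_setsI) (simp_all add: P.emeasure_eq_measure measure_le_0_iff)
  then show ?thesis
    unfolding M_def[symmetric] by (rule AE_I') (auto simp: path_def)
qed

lemma run_hist_eq_map_last: "run_hist D \<rho> n = map (\<lambda>i. last (run_hist D \<rho> i)) [0..<Suc n]"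
proof (induction n)
  case (Suc n)
  have "run_hist D \<rho> (Suc n) = run_hist D \<rho> n @ [last (run_hist D \<rho> (Suc n))]"
    by simp
  also have "\<dots> = map (\<lambda>i. last (run_hist D \<rho> i)) [0..<Suc (Suc n)]"
    by (subst Suc.IH) (simp only: map_append upt_Suc_append[of 0] list.map zero_le)
  finally show ?case .
qed simp

lemma run_hist_not_Nil [simp]: "run_hist D \<rho> n \<noteq> []"
  by (cases n) simp_all

lemma set_run_hist_subset:
  assumes "init D \<in> S" and "\<And>h. h \<noteq> [] \<Longrightarrow> set h \<subseteq> S \<Longrightarrow> \<rho> h \<in> S"
  shows "set (run_hist D \<rho> n) \<subseteq> S"
  using assms by (induction n) simp_all

lemma AE_induced_chain_closed:
  assumes "countable S" and "\<And>h. h \<noteq> [] \<Longrightarrow> set h \<subseteq> S \<Longrightarrow> set_pmf (Pr (last h) (f h)) \<subseteq> S"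
  shows "AE \<rho> in induced_chain Pr f. \<forall>h. h \<noteq> [] \<longrightarrow> set h \<subseteq> S \<longrightarrow> \<rho> h \<in> S"
proof -
  have "AE \<rho> in PiM UNIV (\<lambda>h. measure_pmf (Pr (last h) (f h))). \<rho> h \<in> S"
    if "h \<in> lists S - {[]}" for h
    using that assms(2)[of h] by (intro eventually_mono[OF AE_PiM_measure_pmf_in_set_pmf]) auto
  then have "AE \<rho> in induced_chain Pr f. \<forall>h \<in> lists S - {[]}. \<rho> h \<in> S"
    unfolding induced_chain_def using assms(1) by (subst AE_ball_countable) auto
  then show ?thesis
    by (rule eventually_mono) (auto simp: in_lists_conv_set)
qed

definition ltlf_or :: "'p ltlf \<Rightarrow> 'p ltlf \<Rightarrow> 'p ltlf" where
  "ltlf_or \<phi> \<psi> = Neg (Conj (Neg \<phi>) (Neg \<psi>))"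

(* LTLf has no constant true: any tautology over an atom serves. *)
definition ltlf_true :: "'p \<Rightarrow> 'p ltlf" where
  "ltlf_true p = Neg (Conj (Atom p) (Neg (Atom p)))"

lemma ltlf_sat_or [simp]: "ltlf_sat w j (ltlf_or \<phi> \<psi>) \<longleftrightarrow> ltlf_sat w j \<phi> \<or> ltlf_sat w j \<psi>"
  by (simp add: ltlf_or_def)

lemma ltlf_sat_true [simp]: "ltlf_sat w j (ltlf_true p)"
  by (simp add: ltlf_true_def)

definition coin_domain :: "nat domain" where
  "coin_domain = \<lparr>fluents = {0}, actions = {1}, init = {}, trans = Pow {0} \<times> {{}} \<times> Pow {0}\<rparr>"

definition idle_policy :: "nat set list \<Rightarrow> nat set" where
  "idle_policy h = {}"

definition breaks_0011 :: "nat ltlf" where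
  "breaks_0011 =
     ltlf_or (Until (ltlf_true 0) (ltlf_or (Conj (Atom 0) (Next (Next (Atom 0))))
                                           (Conj (Neg (Atom 0)) (Next (Next (Neg (Atom 0)))))))
             (Next (Atom 0))"

definition pattern_0011 :: "nat \<Rightarrow> nat set" where
  "pattern_0011 n = (if n mod 4 < 2 then {} else {0})"

definition pattern_0011_hist :: "nat \<Rightarrow> nat set list" where
  "pattern_0011_hist n = map pattern_0011 [0..<Suc n]"

lemma states_coin_domain [simp]: "states coin_domain = {{}, {0}}"
  unfolding states_def coin_domain_def by auto

lemma trans_coin_domain [simp]: "trans coin_domain = {{}, {0}} \<times> {{}} \<times> {{}, {0}}"
  unfolding coin_domain_def by auto

lemma applicable_coin_domain: "applicable coin_domain s a \<longleftrightarrow> s \<in> {{}, {0}} \<and> a = {}"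
  unfolding applicable_def by auto

lemma planning_domain_coin_domain: "planning_domain coin_domain"
  unfolding planning_domain_def applicable_coin_domain states_coin_domain trans_coin_domain acts_def
  by (simp add: coin_domain_def)

lemma finite_state_policy_idle: "finite_state_policy coin_domain idle_policy"
  unfolding finite_state_policy_def
proof
  show "is_policy coin_domain idle_policy"
    unfolding is_policy_def applicable_coin_domain states_coin_domain idle_policy_def
    by (auto dest!: last_in_set)
  show "\<exists>(Q :: nat set) q0 (delta :: nat \<Rightarrow> nat set \<Rightarrow> nat) (out :: nat \<Rightarrow> nat set \<Rightarrow> nat set).
          finite Q \<and> q0 \<in> Q \<and> (\<forall>q\<in>Q. \<forall>s\<in>states coin_domain. delta q s \<in> Q) \<and>
          (\<forall>u. u \<noteq> [] \<and> set u \<subseteq> states coin_domain \<longrightarrow>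
             idle_policy u = out (foldl delta q0 (butlast u)) (last u))"
    by (rule exI[of _ "{0}"], rule exI[of _ 0], rule exI[of _ "\<lambda>_ _. 0"], rule exI[of _ "\<lambda>_ _. {}"])
       (simp add: idle_policy_def)
qed

lemma is_policy_coin_domain_idle:
  "is_policy coin_domain g \<Longrightarrow> h \<noteq> [] \<Longrightarrow> set h \<subseteq> {{}, {0}} \<Longrightarrow> g h = {}"
  unfolding is_policy_def applicable_coin_domain by simp

lemma ltlf_atoms_breaks_0011: "ltlf_atoms breaks_0011 \<subseteq> fluents coin_domain \<union> actions coin_domain"
  by (simp add: breaks_0011_def ltlf_or_def ltlf_true_def coin_domain_def)

lemma ltlf_sat_prefix_breaks_0011:
  "ltlf_sat (map w [0..<Suc n]) 0 breaks_0011 \<longleftrightarrow>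
     (\<exists>k. k + 2 \<le> n \<and> (0 \<in> w k \<longleftrightarrow> 0 \<in> w (k + 2))) \<or> (1 \<le> n \<and> 0 \<in> w 1)"
  unfolding breaks_0011_def
  by (auto simp del: upt_Suc simp: nth_map_upt Suc_le_eq) (metis Suc_lessD less_SucI)

lemma inf_sat_breaks_0011:
  "inf_sat ss as breaks_0011 \<longleftrightarrow>
     (\<exists>k. (0 \<in> ss k \<union> as k) \<longleftrightarrow> (0 \<in> ss (k + 2) \<union> as (k + 2))) \<or> 0 \<in> ss 1 \<union> as 1"
  unfolding inf_sat_def ltlf_models_def ltlf_sat_prefix_breaks_0011
  by (auto intro: exI[of _ 1])

lemma pattern_0011_in_states: "pattern_0011 n \<in> {{}, {0}}"
  by (simp add: pattern_0011_def)

lemma last_pattern_0011_hist [simp]: "last (pattern_0011_hist n) = pattern_0011 n"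
  by (simp add: pattern_0011_hist_def)

lemma inj_pattern_0011_hist: "inj pattern_0011_hist"
  by (rule injI) (metis pattern_0011_hist_def length_map length_upt diff_zero Suc_inject)

lemma pattern_0011_alternates: "(0 \<in> pattern_0011 n) \<noteq> (0 \<in> pattern_0011 (n + 2))"
proof -
  have "(n + 2) mod 4 < 2 \<longleftrightarrow> \<not> n mod 4 < 2" by presburger
  then show ?thesis by (simp add: pattern_0011_def)
qed

lemma not_inf_sat_pattern_0011: "\<not> inf_sat pattern_0011 (\<lambda>_. {}) breaks_0011"
proof -
  have "0 \<notin> pattern_0011 1" by (simp add: pattern_0011_def)
  then show ?thesis
    unfolding inf_sat_breaks_0011 using pattern_0011_alternates by blast
qed

lemma pattern_0011_unique:
  assumes states: "\<And>n. w n \<in> {{}, {0}}" and "w 0 = {}" and "0 \<notin> w 1"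
    and alternates: "\<And>k. (0 \<in> w k) \<noteq> (0 \<in> w (k + 2))"
  shows "w n = pattern_0011 n"
proof (induction n rule: nat_induct2)
  case 0
  show ?case using \<open>w 0 = {}\<close> by (simp add: pattern_0011_def)
next
  case 1
  show ?case using states[of 1] \<open>0 \<notin> w 1\<close> by (auto simp: pattern_0011_def)
next
  case (step k)
  have state_eqI: "s = t" if "s \<in> {{}, {0}}" "t \<in> {{}, {0}}" "0 \<in> s \<longleftrightarrow> 0 \<in> t" for s t :: "nat set"
    using that by auto
  have "0 \<in> w (k + 2) \<longleftrightarrow> 0 \<in> pattern_0011 (k + 2)"
    using alternates[of k] pattern_0011_alternates[of k] step by blast
  then show ?case
    by (rule state_eqI[OF states pattern_0011_in_states])
qed

lemma pattern_0011_f_trace: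
  assumes "is_policy coin_domain g"
  shows "is_f_trace coin_domain g pattern_0011 (\<lambda>_. {})"
proof -
  have "g (map pattern_0011 [0..<Suc i]) = {}" for i
    by (rule is_policy_coin_domain_idle[OF assms]) (auto simp: pattern_0011_def)
  then show ?thesis
    unfolding is_f_trace_def by (simp add: pattern_0011_def coin_domain_def)
qed

lemma INFM_pattern_0011_transition:
  assumes "s \<in> {{}, {0}}" and "s' \<in> {{}, {0}}"
  shows "\<exists>\<^sub>\<infinity> i. pattern_0011 i = s \<and> pattern_0011 (Suc i) = s'"
proof -
  obtain r where r: "pattern_0011 r = s" "pattern_0011 (Suc r) = s'"
    using assms by (auto simp: pattern_0011_def intro: that[of 0] that[of 1] that[of 2] that[of 3])
  have periodic: "pattern_0011 (n + 4 * m) = pattern_0011 n" for n m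
    by (simp add: pattern_0011_def)
  show ?thesis
    unfolding INFM_nat
  proof (intro allI)
    fix m
    show "\<exists>n>m. pattern_0011 n = s \<and> pattern_0011 (Suc n) = s'"
      using periodic[of r "Suc m"] periodic[of "Suc r" "Suc m"] r
      by (intro exI[of _ "r + 4 * Suc m"]) simp
  qed
qed

lemma sa_fair_pattern_0011: "sa_fair coin_domain pattern_0011 (\<lambda>_. {})"
  unfolding sa_fair_def trans_coin_domain using INFM_pattern_0011_transition by auto

lemma no_sa_fair_policy_breaks_0011:
  "\<not> (\<exists>g. is_policy coin_domain g \<and> A_sa_fair coin_domain g breaks_0011)"
  unfolding A_sa_fair_def
  using pattern_0011_f_trace sa_fair_pattern_0011 not_inf_sat_pattern_0011 by blast

lemma set_pmf_stoch_instance_coin_domain: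
  assumes "stoch_instance coin_domain Pr" and "s \<in> {{}, {0}}"
  shows "set_pmf (Pr s {}) = {{}, {0}}"
proof -
  have "applicable coin_domain s {}"
    using assms(2) unfolding applicable_coin_domain by blast
  then have "set_pmf (Pr s {}) = {s'. (s, {}, s') \<in> trans coin_domain}"
    using assms unfolding stoch_instance_def states_coin_domain by blast
  also have "\<dots> = {{}, {0}}"
    using assms(2) unfolding trans_coin_domain by blast
  finally show ?thesis .
qed

lemma AE_leaves_pattern_0011:
  assumes "stoch_instance coin_domain Pr"
  shows "AE \<rho> in induced_chain Pr idle_policy. \<exists>n. \<rho> (pattern_0011_hist n) \<noteq> pattern_0011 (Suc n)"
  unfolding induced_chain_def idle_policy_def
proof (rule AE_PiM_measure_pmf_leaves_path[OF inj_pattern_0011_hist])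
  have "range (\<lambda>n. (pattern_0011 n, pattern_0011 (Suc n))) \<subseteq> {{}, {0}} \<times> {{}, {0}}"
    using pattern_0011_in_states by blast
  then have "finite (range (\<lambda>n. (pattern_0011 n, pattern_0011 (Suc n))))"
    by (rule finite_subset) simp
  from finite_range_imageI[OF this, of "\<lambda>(s, s'). (Pr s {}, s')"]
  show "finite (range (\<lambda>n. (Pr (last (pattern_0011_hist n)) {}, pattern_0011 (Suc n))))"
    by simp
  show "pmf (Pr (last (pattern_0011_hist n)) {}) (pattern_0011 (Suc n)) < 1" for n
    by (rule pmf_less_one)
       (simp add: set_pmf_stoch_instance_coin_domain[OF assms pattern_0011_in_states])
qed

lemma violating_run_follows_pattern_0011:
  assumes closed: "\<forall>h. h \<noteq> [] \<longrightarrow> set h \<subseteq> {{}, {0}} \<longrightarrow> \<rho> h \<in> {{}, {0}}"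
    and violates: "\<not> inf_sat (\<lambda>i. last (run_hist coin_domain \<rho> i))
                            (\<lambda>i. idle_policy (run_hist coin_domain \<rho> i)) breaks_0011"
  shows "\<rho> (pattern_0011_hist n) = pattern_0011 (Suc n)"
proof -
  let ?w = "\<lambda>i. last (run_hist coin_domain \<rho> i)"
  have alternates: "\<And>k. (0 \<in> ?w k) \<noteq> (0 \<in> ?w (k + 2))" and "0 \<notin> ?w 1"
    using violates unfolding inf_sat_breaks_0011 idle_policy_def by auto
  have "set (run_hist coin_domain \<rho> i) \<subseteq> {{}, {0}}" for i
    by (rule set_run_hist_subset) (simp add: coin_domain_def, use closed in blast)
  then have "?w i \<in> {{}, {0}}" for i
    using last_in_set[OF run_hist_not_Nil] by blast
  then have w: "?w i = pattern_0011 i" for i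
    by (rule pattern_0011_unique[OF _ _ \<open>0 \<notin> ?w 1\<close> alternates]) (simp add: coin_domain_def)
  then have "run_hist coin_domain \<rho> n = pattern_0011_hist n"
    by (subst run_hist_eq_map_last) (simp add: pattern_0011_hist_def)
  then show ?thesis
    using w[of "Suc n"] by simp
qed

lemma A_prob1_idle_breaks_0011: "A_prob1 coin_domain idle_policy breaks_0011"
  unfolding A_prob1_def
proof (intro allI impI)
  fix Pr assume stoch: "stoch_instance coin_domain Pr"
  have closed: "AE \<rho> in induced_chain Pr idle_policy.
                  \<forall>h. h \<noteq> [] \<longrightarrow> set h \<subseteq> {{}, {0}} \<longrightarrow> \<rho> h \<in> {{}, {0}}"
  proof (rule AE_induced_chain_closed)
    fix h :: "nat set list" assume "h \<noteq> []" "set h \<subseteq> {{}, {0}}"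
    then have "last h \<in> {{}, {0}}" by (meson last_in_set subsetD)
    then show "set_pmf (Pr (last h) (idle_policy h)) \<subseteq> {{}, {0}}"
      by (simp add: set_pmf_stoch_instance_coin_domain[OF stoch] idle_policy_def)
  qed simp
  from closed AE_leaves_pattern_0011[OF stoch]
  show "AE \<rho> in induced_chain Pr idle_policy.
          inf_sat (\<lambda>i. last (run_hist coin_domain \<rho> i)) (\<lambda>i. idle_policy (run_hist coin_domain \<rho> i))
            breaks_0011"
  proof eventually_elim
    case (elim \<rho>)
    show ?case
    proof (rule ccontr)
      assume "\<not> ?case"
      with elim(1) have "\<rho> (pattern_0011_hist n) = pattern_0011 (Suc n)" for n
        by (rule violating_run_follows_pattern_0011)
      with elim(2) show False by blast
    qed
  qed
qed

theorem proposition3: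
  shows "\<exists>(D :: nat domain) f (\<psi> :: nat ltlf).
           planning_domain D \<and> finite_state_policy D f \<and>
           ltlf_atoms \<psi> \<subseteq> fluents D \<union> actions D \<and>
           A_prob1 D f \<psi> \<and>
           \<not> (\<exists>g. is_policy D g \<and> A_sa_fair D g \<psi>)"
  using planning_domain_coin_domain finite_state_policy_idle ltlf_atoms_breaks_0011
    A_prob1_idle_breaks_0011 no_sa_fair_policy_breaks_0011 by blast

end
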